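(* There is a natural transformation $\iota\colon M\otimes-\to N\otimes-$ of endofunctors of $\mathsf{SquaMS}$ whose component $\iota_X\colon M\otimes X\to N\otimes X$ is the inclusion $m\otimes x\mapsto m\otimes x$.
   Context: Let $M_0=\{(r,s)\in[0,1]^2: r\in\{0,1\}\text{ or } s\in\{0,1\}\}$. A square metric space is a pair $(X,S_X)$ with $X$ a metric space with all distances at most $2$ and $S_X\colon M_0\to X$ injective such that (sq1) for $i\in\{0,1\}$, $r,s\in[0,1]$: $d_X(S_X(i,r),S_X(i,s))=|s-r|$ and $d_X(S_X(r,i),S_X(s,i))=|s-r|$; (sq2) $d_X(S_X(r,s),S_X(t,u))\ge|r-t|+|s-u|$. $\mathsf{SquaMS}$: these objects, with short maps $f$ satisfying $f\circ S_X=S_Y$ as morphisms. Let $N=\{0,1,2\}^2$, $M=N\setminus\{(1,1)\}$, also viewed as points of $\mathbb{R}^2$. For $P\in\{M,N\}$ and $X$ in $\mathsf{SquaMS}$, $P\otimes X=(P\times X)/\!\sim$, where $\sim$ is generated by $(m,S_X(p))\sim(n,S_X(q))$ whenever $m,n\in P$ differ by exactly $1$ in exactly one coordinate and $(m+p)/3=(n+q)/3$; $m\otimes x$ is the class of $(m,x)$; the metric is the quotient of $d((a,u),(b,v))=\frac13 d_X(u,v)$ if $a=b$, $2$ otherwise (infimum over finite chains, $\sim$-related consecutive pairs counting $0$); $S_{P\otimes X}(p)=m\otimes S_X(3p-m)$ for any $m\in P$ with $p\in(m+[0,1]^2)/3$; $(P\otimes f)(m\otimes x)=m\otimes f(x)$.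 *)

theory Defs
  imports "HOL-Analysis.Analysis"
begin

record 'a sqms =
  sq_carrier :: "'a set"
  sq_dist :: "'a \<Rightarrow> 'a \<Rightarrow> real"
  sq_map :: "real \<times> real \<Rightarrow> 'a"

definition M0 :: "(real \<times> real) set" where
  "M0 = {(r, s). r \<in> {0..1} \<and> s \<in> {0..1} \<and> (r \<in> {0, 1} \<or> s \<in> {0, 1})}"

definition is_sqms :: "('a, 'z) sqms_scheme \<Rightarrow> bool" where
  "is_sqms X \<longleftrightarrow>
     Metric_space (sq_carrier X) (sq_dist X)
   \<and> (\<forall>x\<in>sq_carrier X. \<forall>y\<in>sq_carrier X. sq_dist X x y \<le> 2)
   \<and> sq_map X ` M0 \<subseteq> sq_carrier X
   \<and> inj_on (sq_map X) M0
   \<and> (\<forall>i\<in>{0, 1::real}. \<forall>r\<in>{0..1}. \<forall>s\<in>{0..1}.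
        sq_dist X (sq_map X (i, r)) (sq_map X (i, s)) = \<bar>s - r\<bar>
      \<and> sq_dist X (sq_map X (r, i)) (sq_map X (s, i)) = \<bar>s - r\<bar>)
   \<and> (\<forall>r s t u. (r, s) \<in> M0 \<longrightarrow> (t, u) \<in> M0 \<longrightarrow>
        sq_dist X (sq_map X (r, s)) (sq_map X (t, u)) \<ge> \<bar>r - t\<bar> + \<bar>s - u\<bar>)"

definition sqms_mor :: "('a, 'z) sqms_scheme \<Rightarrow> ('b, 'w) sqms_scheme \<Rightarrow> ('a \<Rightarrow> 'b) \<Rightarrow> bool" where
  "sqms_mor X Y f \<longleftrightarrow>
     f ` sq_carrier X \<subseteq> sq_carrier Y
   \<and> (\<forall>x\<in>sq_carrier X. \<forall>y\<in>sq_carrier X. sq_dist Y (f x) (f y) \<le> sq_dist X x y)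
   \<and> (\<forall>p\<in>M0. f (sq_map X p) = sq_map Y p)"

definition Ngrid :: "(int \<times> int) set" where
  "Ngrid = {0, 1, 2} \<times> {0, 1, 2}"

definition Mgrid :: "(int \<times> int) set" where
  "Mgrid = Ngrid - {(1, 1)}"

definition adj :: "int \<times> int \<Rightarrow> int \<times> int \<Rightarrow> bool" where
  "adj m n \<longleftrightarrow> (\<bar>fst m - fst n\<bar> = 1 \<and> snd m = snd n) \<or> (fst m = fst n \<and> \<bar>snd m - snd n\<bar> = 1)"

definition glue_gen :: "(int \<times> int) set \<Rightarrow> 'a sqms \<Rightarrow> (((int \<times> int) \<times> 'a) \<times> ((int \<times> int) \<times> 'a)) set" where
  "glue_gen P X = {((m, sq_map X p), (n, sq_map X q)) | m n p q.
      m \<in> P \<and> n \<in> P \<and> adj m n \<and> p \<in> M0 \<and> q \<in> M0 \<and>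
      (of_int (fst m) + fst p) / 3 = (of_int (fst n) + fst q) / 3 \<and>
      (of_int (snd m) + snd p) / 3 = (of_int (snd n) + snd q) / 3}"

definition tens_rel :: "(int \<times> int) set \<Rightarrow> 'a sqms \<Rightarrow> (((int \<times> int) \<times> 'a) \<times> ((int \<times> int) \<times> 'a)) set" where
  "tens_rel P X = (glue_gen P X \<union> (glue_gen P X)\<inverse>)\<^sup>* \<inter> ((P \<times> sq_carrier X) \<times> (P \<times> sq_carrier X))"

definition tclass :: "(int \<times> int) set \<Rightarrow> 'a sqms \<Rightarrow> (int \<times> int) \<times> 'a \<Rightarrow> ((int \<times> int) \<times> 'a) set" where
  "tclass P X a = tens_rel P X `` {a}"

definition tbase :: "'a sqms \<Rightarrow> (int \<times> int) \<times> 'a \<Rightarrow> (int \<times> int) \<times> 'a \<Rightarrow> real" where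
  "tbase X a b = (if fst a = fst b then sq_dist X (snd a) (snd b) / 3 else 2)"

definition chain_cost :: "(int \<times> int) set \<Rightarrow> 'a sqms \<Rightarrow> ((int \<times> int) \<times> 'a) list \<Rightarrow> real" where
  "chain_cost P X xs = sum_list (map (\<lambda>(a, b). if (a, b) \<in> tens_rel P X then 0 else tbase X a b) (zip xs (tl xs)))"

definition tdist :: "(int \<times> int) set \<Rightarrow> 'a sqms \<Rightarrow> ((int \<times> int) \<times> 'a) set \<Rightarrow> ((int \<times> int) \<times> 'a) set \<Rightarrow> real" where
  "tdist P X c1 c2 = Inf {chain_cost P X xs | xs. xs \<noteq> [] \<and> set xs \<subseteq> P \<times> sq_carrier X \<and> hd xs \<in> c1 \<and> last xs \<in> c2}"

definition in_cell :: "int \<times> int \<Rightarrow> real \<times> real \<Rightarrow> bool" where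
  "in_cell m p \<longleftrightarrow> 3 * fst p - of_int (fst m) \<in> {0..1} \<and> 3 * snd p - of_int (snd m) \<in> {0..1}"

definition tS :: "(int \<times> int) set \<Rightarrow> 'a sqms \<Rightarrow> real \<times> real \<Rightarrow> ((int \<times> int) \<times> 'a) set" where
  "tS P X p = (SOME c. \<exists>m\<in>P. in_cell m p \<and>
      c = tclass P X (m, sq_map X (3 * fst p - of_int (fst m), 3 * snd p - of_int (snd m))))"

definition tensor :: "(int \<times> int) set \<Rightarrow> 'a sqms \<Rightarrow> ((int \<times> int) \<times> 'a) set sqms" where
  "tensor P X = \<lparr> sq_carrier = (P \<times> sq_carrier X) // tens_rel P X,
                  sq_dist = tdist P X, sq_map = tS P X \<rparr>"

definition tmap :: "(int \<times> int) set \<Rightarrow> 'a sqms \<Rightarrow> 'b sqms \<Rightarrow> ('a \<Rightarrow> 'b) \<Rightarrow>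
    ((int \<times> int) \<times> 'a) set \<Rightarrow> ((int \<times> int) \<times> 'b) set" where
  "tmap P X Y f c = (let a = (SOME a. a \<in> c) in tclass P Y (fst a, f (snd a)))"

definition iota :: "'a sqms \<Rightarrow> ((int \<times> int) \<times> 'a) set \<Rightarrow> ((int \<times> int) \<times> 'a) set" where
  "iota X c = tclass Ngrid X (SOME a. a \<in> c)"

end

theory Submission
  imports Defs
begin

text \<open>Since M \<subseteq> N, the gluing relation of M \<otimes> X is contained in that of N \<otimes> X, so
  m \<otimes> x \<mapsto> m \<otimes> x is well defined; every chain in M \<times> X is also a chain in N \<times> X,
  and its cost can only drop, so \<iota> X is short. A point p of M0 never lies in the
  central cell, so the boundary map of N \<otimes> X at p can be computed in a cell of M;
  any two cells of N containing p are adjacent, which makes the boundary map of P \<otimes> X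
  independent of the chosen cell. Naturality holds on representatives, because a
  morphism commutes with the boundary maps and hence preserves the gluing.\<close>

lemma equiv_tens_rel: "equiv (P \<times> sq_carrier X) (tens_rel P X)"
proof (rule equivI)
  have "sym ((glue_gen P X \<union> (glue_gen P X)\<inverse>)\<^sup>*)"
    by (rule sym_rtrancl[OF sym_Un_converse])
  then show "sym (tens_rel P X)"
    unfolding tens_rel_def sym_def by blast
  show "trans (tens_rel P X)"
    unfolding tens_rel_def trans_def by auto
qed (auto simp: tens_rel_def refl_on_def)

lemma tclass_self: "a \<in> P \<times> sq_carrier X \<Longrightarrow> a \<in> tclass P X a"
  unfolding tclass_def by (rule equiv_class_self[OF equiv_tens_rel])

lemma tclass_eq: "(a, b) \<in> tens_rel P X \<Longrightarrow> tclass P X a = tclass P X b"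
  unfolding tclass_def by (rule equiv_class_eq[OF equiv_tens_rel])

lemma tclass_some_rel:
  assumes "a \<in> P \<times> sq_carrier X"
  shows "(a, SOME b. b \<in> tclass P X a) \<in> tens_rel P X"
proof -
  have "(SOME b. b \<in> tclass P X a) \<in> tclass P X a"
    using tclass_self[OF assms] by (rule someI)
  then show ?thesis unfolding tclass_def by simp
qed

lemma tensor_carrier_cases:
  assumes "c \<in> sq_carrier (tensor P X)"
  obtains a where "a \<in> P \<times> sq_carrier X" "c = tclass P X a"
  using assms unfolding tensor_def tclass_def by (auto elim: quotientE)

lemma tclass_in_tensor_carrier: "a \<in> P \<times> sq_carrier X \<Longrightarrow> tclass P X a \<in> sq_carrier (tensor P X)"
  unfolding tensor_def tclass_def by (simp add: quotientI)

lemma tens_rel_mono: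
  assumes "P \<subseteq> Q"
  shows "tens_rel P X \<subseteq> tens_rel Q X"
proof -
  have "glue_gen P X \<subseteq> glue_gen Q X"
    using assms unfolding glue_gen_def by blast
  then have "(glue_gen P X \<union> (glue_gen P X)\<inverse>)\<^sup>* \<subseteq> (glue_gen Q X \<union> (glue_gen Q X)\<inverse>)\<^sup>*"
    by (intro rtrancl_mono) blast
  then show ?thesis
    using assms unfolding tens_rel_def by blast
qed

lemma tens_rel_map:
  assumes f: "sqms_mor X Y f" and ab: "(a, b) \<in> tens_rel P X"
  shows "((fst a, f (snd a)), (fst b, f (snd b))) \<in> tens_rel P Y"
proof -
  let ?g = "\<lambda>z. (fst z, f (snd z))"
  have glue: "(?g u, ?g v) \<in> glue_gen P Y" if "(u, v) \<in> glue_gen P X" for u v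
  proof -
    from that obtain m n p q where uv: "u = (m, sq_map X p)" "v = (n, sq_map X q)"
      and glued: "m \<in> P" "n \<in> P" "adj m n" "p \<in> M0" "q \<in> M0"
        "(of_int (fst m) + fst p) / 3 = (of_int (fst n) + fst q) / 3"
        "(of_int (snd m) + snd p) / 3 = (of_int (snd n) + snd q) / 3"
      unfolding glue_gen_def by blast
    have "f (sq_map X p) = sq_map Y p" "f (sq_map X q) = sq_map Y q"
      using f glued(4,5) unfolding sqms_mor_def by auto
    then show ?thesis
      using glued uv unfolding glue_gen_def by fastforce
  qed
  have "(a, b) \<in> (glue_gen P X \<union> (glue_gen P X)\<inverse>)\<^sup>*"
    using ab unfolding tens_rel_def by blast
  then have "(?g a, ?g b) \<in> (glue_gen P Y \<union> (glue_gen P Y)\<inverse>)\<^sup>*"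
  proof (induction rule: rtrancl_induct)
    case base
    show ?case by simp
  next
    case (step y z)
    then show ?case using glue by (blast intro: rtrancl_into_rtrancl)
  qed
  moreover have "?g a \<in> P \<times> sq_carrier Y" "?g b \<in> P \<times> sq_carrier Y"
    using ab f unfolding tens_rel_def sqms_mor_def by auto
  ultimately show ?thesis unfolding tens_rel_def by blast
qed

lemma tmap_tclass:
  assumes "sqms_mor X Y f" and "a \<in> P \<times> sq_carrier X"
  shows "tmap P X Y f (tclass P X a) = tclass P Y (fst a, f (snd a))"
  using tclass_eq[OF tens_rel_map[OF assms(1) tclass_some_rel[OF assms(2)]]]
  unfolding tmap_def Let_def by simp

lemma iota_tclass:
  assumes "P \<subseteq> Ngrid" and "a \<in> P \<times> sq_carrier X"
  shows "iota X (tclass P X a) = tclass Ngrid X a"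
proof -
  have "(a, SOME b. b \<in> tclass P X a) \<in> tens_rel Ngrid X"
    using tens_rel_mono[OF assms(1)] tclass_some_rel[OF assms(2)] by blast
  then show ?thesis unfolding iota_def by (simp add: tclass_eq)
qed

definition cell_coord :: "int \<times> int \<Rightarrow> real \<times> real \<Rightarrow> real \<times> real" where
  "cell_coord m p = (3 * fst p - of_int (fst m), 3 * snd p - of_int (snd m))"

lemma boundary_cell_index:
  fixes r :: real and i :: int
  assumes "r \<in> {0, 1}" "i \<in> {0, 1, 2}" "3 * r - of_int i \<in> {0..1}"
  shows "of_int i = 2 * r"
  using assms by auto

lemma cell_index_close:
  fixes r :: real and i j :: int
  assumes "3 * r - of_int i \<in> {0..1}" "3 * r - of_int j \<in> {0..1}"
  shows "\<bar>i - j\<bar> \<le> 1"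
proof -
  have "\<bar>of_int i - of_int j\<bar> \<le> (1::real)" using assms by auto
  then show ?thesis by linarith
qed

lemma cell_exists:
  assumes "p \<in> {0..1} \<times> {0..1}"
  shows "\<exists>m\<in>Ngrid. in_cell m p"
proof -
  have index: "min 2 \<lfloor>3 * t\<rfloor> \<in> {0, 1, 2} \<and> 3 * t - of_int (min 2 \<lfloor>3 * t\<rfloor>) \<in> {0..1}"
    if "t \<in> {0..1}" for t :: real
  proof -
    let ?i = "min 2 \<lfloor>3 * t\<rfloor>"
    have "0 \<le> ?i" "?i \<le> 2" using that by auto
    then have "?i \<in> {0, 1, 2}" by (simp only: insert_iff empty_iff) linarith
    moreover have "of_int ?i \<le> 3 * t \<and> 3 * t \<le> of_int ?i + 1"
      using that by (cases "\<lfloor>3 * t\<rfloor> \<le> 2") (simp_all add: min_def)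
    ultimately show ?thesis by simp
  qed
  let ?m = "(min 2 \<lfloor>3 * fst p\<rfloor>, min 2 \<lfloor>3 * snd p\<rfloor>)"
  have "fst p \<in> {0..1}" "snd p \<in> {0..1}" using assms by (auto simp: mem_Times_iff)
  then have "?m \<in> Ngrid" "in_cell ?m p"
    using index unfolding Ngrid_def in_cell_def by auto
  then show ?thesis by blast
qed

lemma M0_cell_in_Mgrid:
  assumes "p \<in> M0" "m \<in> Ngrid" "in_cell m p"
  shows "m \<in> Mgrid"
  using assms unfolding M0_def Ngrid_def Mgrid_def in_cell_def by auto

lemma cell_coord_in_M0:
  assumes "p \<in> M0" "m \<in> Ngrid" "in_cell m p"
  shows "cell_coord m p \<in> M0"
  using assms boundary_cell_index[of "fst p" "fst m"] boundary_cell_index[of "snd p" "snd m"]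
  unfolding M0_def Ngrid_def in_cell_def cell_coord_def by auto

lemma M0_cells_adj:
  assumes p: "p \<in> M0" and m: "m \<in> Ngrid" and n: "n \<in> Ngrid"
    and cells: "in_cell m p" "in_cell n p" and "m \<noteq> n"
  shows "adj m n"
proof -
  have grid: "fst m \<in> {0, 1, 2}" "snd m \<in> {0, 1, 2}" "fst n \<in> {0, 1, 2}" "snd n \<in> {0, 1, 2}"
    using m n by (auto simp: Ngrid_def mem_Times_iff)
  have "fst p \<in> {0, 1} \<or> snd p \<in> {0, 1}"
    using p by (auto simp: M0_def)
  then have "fst m = fst n \<or> snd m = snd n"
  proof
    assume "fst p \<in> {0, 1}"
    then have "real_of_int (fst m) = real_of_int (fst n)"
      using boundary_cell_index[of "fst p"] grid cells unfolding in_cell_def by metis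
    then show ?thesis by simp
  next
    assume "snd p \<in> {0, 1}"
    then have "real_of_int (snd m) = real_of_int (snd n)"
      using boundary_cell_index[of "snd p"] grid cells unfolding in_cell_def by metis
    then show ?thesis by simp
  qed
  moreover have "\<bar>fst m - fst n\<bar> \<le> 1" "\<bar>snd m - snd n\<bar> \<le> 1"
    using cells cell_index_close unfolding in_cell_def by blast+
  ultimately show ?thesis using \<open>m \<noteq> n\<close> unfolding adj_def by (auto simp: prod_eq_iff)
qed

lemma cells_glued:
  assumes X: "is_sqms X" and P: "P \<subseteq> Ngrid" and p: "p \<in> M0"
    and m: "m \<in> P" "in_cell m p" and n: "n \<in> P" "in_cell n p"
  shows "((m, sq_map X (cell_coord m p)), (n, sq_map X (cell_coord n p))) \<in> tens_rel P X"
proof -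
  have coords: "cell_coord m p \<in> M0" "cell_coord n p \<in> M0"
    using cell_coord_in_M0[OF p] m n P by blast+
  then have in_carrier: "(m, sq_map X (cell_coord m p)) \<in> P \<times> sq_carrier X"
      "(n, sq_map X (cell_coord n p)) \<in> P \<times> sq_carrier X"
    using X m n unfolding is_sqms_def by auto
  show ?thesis
  proof (cases "m = n")
    case True
    then show ?thesis
      using tclass_self[OF in_carrier(1)] unfolding tclass_def by simp
  next
    case False
    then have "adj m n" using M0_cells_adj[OF p _ _ m(2) n(2)] m(1) n(1) P by blast
    then have "((m, sq_map X (cell_coord m p)), (n, sq_map X (cell_coord n p))) \<in> glue_gen P X"
      using m n coords unfolding glue_gen_def cell_coord_def by fastforce
    then show ?thesis
      using in_carrier unfolding tens_rel_def by blast
  qed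
qed

lemma tS_tclass:
  assumes X: "is_sqms X" and P: "P \<subseteq> Ngrid" and p: "p \<in> M0" and m: "m \<in> P" "in_cell m p"
  shows "tS P X p = tclass P X (m, sq_map X (cell_coord m p))"
proof -
  have tS_eq: "tS P X p = (SOME c. \<exists>n\<in>P. in_cell n p \<and> c = tclass P X (n, sq_map X (cell_coord n p)))"
    unfolding tS_def cell_coord_def ..
  have "\<exists>n\<in>P. in_cell n p \<and> tS P X p = tclass P X (n, sq_map X (cell_coord n p))"
    unfolding tS_eq by (rule someI_ex) (use m in blast)
  then show ?thesis
    using cells_glued[OF X P p m] tclass_eq by metis
qed

lemma tbase_nonneg: "is_sqms X \<Longrightarrow> 0 \<le> tbase X a b"
  unfolding is_sqms_def tbase_def by (auto intro: Metric_space.nonneg)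

lemma chain_cost_antimono:
  assumes X: "is_sqms X" and "P \<subseteq> Q"
  shows "chain_cost Q X xs \<le> chain_cost P X xs"
  unfolding chain_cost_def
proof (rule sum_list_mono, clarify)
  fix a b
  show "(if (a, b) \<in> tens_rel Q X then 0 else tbase X a b)
      \<le> (if (a, b) \<in> tens_rel P X then 0 else tbase X a b)"
    using tens_rel_mono[OF \<open>P \<subseteq> Q\<close>] tbase_nonneg[OF X] by auto
qed

lemma tdist_antimono:
  assumes X: "is_sqms X" and "P \<subseteq> Q" and a: "a \<in> P \<times> sq_carrier X" and b: "b \<in> P \<times> sq_carrier X"
  shows "tdist Q X (tclass Q X a) (tclass Q X b) \<le> tdist P X (tclass P X a) (tclass P X b)"
  unfolding tdist_def
proof (rule cInf_mono)
  have "a \<in> tclass P X a" "b \<in> tclass P X b"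
    using tclass_self a b by blast+
  then show "{chain_cost P X xs |xs. xs \<noteq> [] \<and> set xs \<subseteq> P \<times> sq_carrier X \<and>
      hd xs \<in> tclass P X a \<and> last xs \<in> tclass P X b} \<noteq> {}"
    using a b by (auto intro!: exI[of _ "[a, b]"])
  have "0 \<le> chain_cost Q X xs" for xs
    unfolding chain_cost_def using tbase_nonneg[OF X] by (auto intro!: sum_list_nonneg)
  then show "bdd_below {chain_cost Q X xs |xs. xs \<noteq> [] \<and> set xs \<subseteq> Q \<times> sq_carrier X \<and>
      hd xs \<in> tclass Q X a \<and> last xs \<in> tclass Q X b}"
    by (auto intro: bdd_belowI[of _ 0])
  have "tclass P X c \<subseteq> tclass Q X c" for c
    unfolding tclass_def using tens_rel_mono[OF \<open>P \<subseteq> Q\<close>] by blast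
  then show "\<exists>d\<in>{chain_cost Q X xs |xs. xs \<noteq> [] \<and> set xs \<subseteq> Q \<times> sq_carrier X \<and>
      hd xs \<in> tclass Q X a \<and> last xs \<in> tclass Q X b}. d \<le> e"
    if "e \<in> {chain_cost P X xs |xs. xs \<noteq> [] \<and> set xs \<subseteq> P \<times> sq_carrier X \<and>
      hd xs \<in> tclass P X a \<and> last xs \<in> tclass P X b}" for e
    using that \<open>P \<subseteq> Q\<close> chain_cost_antimono[OF X \<open>P \<subseteq> Q\<close>] by blast
qed

lemma Mgrid_subset_Ngrid: "Mgrid \<subseteq> Ngrid"
  unfolding Mgrid_def by blast

lemma sqms_mor_iota:
  assumes X: "is_sqms X"
  shows "sqms_mor (tensor Mgrid X) (tensor Ngrid X) (iota X)"
  unfolding sqms_mor_def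
proof (intro conjI ballI image_subsetI)
  fix c assume "c \<in> sq_carrier (tensor Mgrid X)"
  then obtain a where a: "a \<in> Mgrid \<times> sq_carrier X" and c: "c = tclass Mgrid X a"
    by (rule tensor_carrier_cases)
  have "a \<in> Ngrid \<times> sq_carrier X" using a Mgrid_subset_Ngrid by blast
  then show "iota X c \<in> sq_carrier (tensor Ngrid X)"
    unfolding c iota_tclass[OF Mgrid_subset_Ngrid a] by (rule tclass_in_tensor_carrier)
next
  fix c d assume "c \<in> sq_carrier (tensor Mgrid X)" "d \<in> sq_carrier (tensor Mgrid X)"
  then obtain a b where a: "a \<in> Mgrid \<times> sq_carrier X" "c = tclass Mgrid X a"
    and b: "b \<in> Mgrid \<times> sq_carrier X" "d = tclass Mgrid X b"
    by (metis tensor_carrier_cases)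
  show "sq_dist (tensor Ngrid X) (iota X c) (iota X d) \<le> sq_dist (tensor Mgrid X) c d"
    using tdist_antimono[OF X Mgrid_subset_Ngrid a(1) b(1)]
    by (simp add: tensor_def a b iota_tclass[OF Mgrid_subset_Ngrid])
next
  fix p assume p: "p \<in> M0"
  then have "p \<in> {0..1} \<times> {0..1}" by (auto simp: M0_def)
  then obtain m where m: "m \<in> Ngrid" "in_cell m p" using cell_exists by blast
  have "m \<in> Mgrid" using M0_cell_in_Mgrid[OF p m] .
  moreover have "sq_map X (cell_coord m p) \<in> sq_carrier X"
    using X cell_coord_in_M0[OF p m] unfolding is_sqms_def by blast
  ultimately show "iota X (sq_map (tensor Mgrid X) p) = sq_map (tensor Ngrid X) p"
    using tS_tclass[OF X Mgrid_subset_Ngrid p _ m(2)] tS_tclass[OF X subset_refl p m]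
    by (simp add: tensor_def iota_tclass[OF Mgrid_subset_Ngrid])
qed

lemma iota_natural:
  assumes f: "sqms_mor X Y f" and c: "c \<in> sq_carrier (tensor Mgrid X)"
  shows "tmap Ngrid X Y f (iota X c) = iota Y (tmap Mgrid X Y f c)"
proof -
  obtain a where a: "a \<in> Mgrid \<times> sq_carrier X" and c: "c = tclass Mgrid X a"
    using c by (rule tensor_carrier_cases)
  have "a \<in> Ngrid \<times> sq_carrier X" using a Mgrid_subset_Ngrid by blast
  moreover have "(fst a, f (snd a)) \<in> Mgrid \<times> sq_carrier Y"
    using a f unfolding sqms_mor_def by auto
  ultimately show ?thesis
    by (simp add: c iota_tclass[OF Mgrid_subset_Ngrid] a tmap_tclass[OF f])
qed

theorem mainTheorem17:
  fixes X :: "'a sqms" and Y :: "'b sqms" and f :: "'a \<Rightarrow> 'b"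
  assumes "is_sqms X" and "is_sqms Y" and "sqms_mor X Y f"
  shows "(\<forall>m\<in>Mgrid. \<forall>x\<in>sq_carrier X. iota X (tclass Mgrid X (m, x)) = tclass Ngrid X (m, x))
       \<and> sqms_mor (tensor Mgrid X) (tensor Ngrid X) (iota X)
       \<and> (\<forall>c\<in>sq_carrier (tensor Mgrid X).
            tmap Ngrid X Y f (iota X c) = iota Y (tmap Mgrid X Y f c))"
proof (intro conjI ballI)
  fix m x assume "m \<in> Mgrid" "x \<in> sq_carrier X"
  then show "iota X (tclass Mgrid X (m, x)) = tclass Ngrid X (m, x)"
    by (simp add: iota_tclass[OF Mgrid_subset_Ngrid])
next
  show "sqms_mor (tensor Mgrid X) (tensor Ngrid X) (iota X)"
    using sqms_mor_iota[OF assms(1)] .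
next
  fix c assume "c \<in> sq_carrier (tensor Mgrid X)"
  then show "tmap Ngrid X Y f (iota X c) = iota Y (tmap Mgrid X Y f c)"
    by (rule iota_natural[OF assms(3)])
qed

end
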